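(* Let $m,n$ be finite integers with $m\geq 2$ and $n\geq 2$. Then $\gamma_{gr}^{2}(P_m\Box P_n)=mn-1$.
   Context: $P_m$ is the path on $m$ vertices and $G\Box H$ is the Cartesian product: vertex set $V(G)\times V(H)$, with $(u,v)\sim(x,y)$ iff ($u=x$ and $vy\in E(H)$) or ($v=y$ and $ux\in E(G)$). For a vertex $v$, $N(v)$ is its open neighborhood and $N[v]=N(v)\cup\{v\}$. A sequence $S=(v_1,\ldots,v_r)$ of distinct vertices is a $2$-sequence if for each $i$ there is $u_i\in N[v_i]$ such that the number of indices $j<i$ with $u_i\in N[v_j]$ is less than $2$. $\gamma_{gr}^{2}(G)$ is the maximum length of a $2$-sequence of $G$. *)

theory Defs
  imports Main
begin

text \<open>A graph is given by a vertex set V and a symmetric irreflexive adjacency relation E.\<close>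

definition closed_nbhd :: "'a set \<Rightarrow> ('a \<Rightarrow> 'a \<Rightarrow> bool) \<Rightarrow> 'a \<Rightarrow> 'a set" where
  "closed_nbhd V E v = {u \<in> V. E v u} \<union> {v}"

definition is_k_sequence :: "nat \<Rightarrow> 'a set \<Rightarrow> ('a \<Rightarrow> 'a \<Rightarrow> bool) \<Rightarrow> 'a list \<Rightarrow> bool" where
  "is_k_sequence k V E S \<longleftrightarrow> distinct S \<and> set S \<subseteq> V \<and>
     (\<forall>i < length S. \<exists>u \<in> closed_nbhd V E (S ! i).
        card {j. j < i \<and> u \<in> closed_nbhd V E (S ! j)} < k)"

definition grundy_k :: "nat \<Rightarrow> 'a set \<Rightarrow> ('a \<Rightarrow> 'a \<Rightarrow> bool) \<Rightarrow> nat" where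
  "grundy_k k V E = Max {length S | S. is_k_sequence k V E S}"

definition path_V :: "nat \<Rightarrow> nat set" where "path_V m = {0..<m}"
definition path_E :: "nat \<Rightarrow> nat \<Rightarrow> bool" where "path_E i j \<longleftrightarrow> i = Suc j \<or> j = Suc i"

definition cart_V :: "'a set \<Rightarrow> 'b set \<Rightarrow> ('a \<times> 'b) set" where "cart_V V1 V2 = V1 \<times> V2"
definition cart_E :: "('a \<Rightarrow> 'a \<Rightarrow> bool) \<Rightarrow> ('b \<Rightarrow> 'b \<Rightarrow> bool) \<Rightarrow> 'a \<times> 'b \<Rightarrow> 'a \<times> 'b \<Rightarrow> bool" where
  "cart_E E1 E2 p q \<longleftrightarrow> (fst p = fst q \<and> E2 (snd p) (snd q)) \<or> (snd p = snd q \<and> E1 (fst p) (fst q))"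

end

theory Submission
  imports Defs
begin

text \<open>In a graph of minimum degree at least \<open>k\<close>, a \<open>k\<close>-sequence cannot list every
  vertex: if \<open>v\<close> comes last, each \<open>u \<in> N[v]\<close> lies in the closed neighbourhoods of the
  \<open>|N[u]| - 1 \<ge> k\<close> other vertices of \<open>N[u]\<close>, all listed before \<open>v\<close>. The grid has minimum
  degree 2. Conversely, listing the vertices row by row and omitting the last one gives a
  2-sequence: a vertex outside the last row uses the vertex below it, which lies in no earlier
  closed neighbourhood, and a vertex \<open>(m - 1, b)\<close> of the last row uses its right neighbour
  \<open>(m - 1, b + 1)\<close>, which among the earlier ones lies only in that of \<open>(m - 2, b + 1)\<close>.\<close>

lemma card_indices_eq_card_set_take:
  assumes "distinct S" "i \<le> length S"
  shows "card {j. j < i \<and> P (S ! j)} = card {x \<in> set (take i S). P x}"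
proof (rule bij_betw_same_card)
  have "nth S ` {j. j < i \<and> P (S ! j)} = {x \<in> set (take i S). P x}"
    using assms(2) by (auto simp: nth_image[symmetric])
  then show "bij_betw (nth S) {j. j < i \<and> P (S ! j)} {x \<in> set (take i S). P x}"
    using assms by (auto simp: bij_betw_def intro: inj_on_nth)
qed

lemma is_k_sequence_iff_set_take:
  "is_k_sequence k V E S \<longleftrightarrow> distinct S \<and> set S \<subseteq> V \<and>
     (\<forall>i < length S. \<exists>u \<in> closed_nbhd V E (S ! i).
        card {x \<in> set (take i S). u \<in> closed_nbhd V E x} < k)"
  unfolding is_k_sequence_def
  using card_indices_eq_card_set_take[OF _ less_imp_le, where P = "\<lambda>x. u \<in> closed_nbhd V E x" for u]
  by auto

lemma grundy_k_eqI:
  assumes "is_k_sequence k V E S" and "length S = r"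
    and "\<And>S. is_k_sequence k V E S \<Longrightarrow> length S \<le> r"
  shows "grundy_k k V E = r"
  unfolding grundy_k_def
proof (rule Max_eqI)
  have "{length S | S. is_k_sequence k V E S} \<subseteq> {..r}"
    using assms(3) by auto
  then show "finite {length S | S. is_k_sequence k V E S}"
    by (rule finite_subset) simp
  show "l \<le> r" if "l \<in> {length S | S. is_k_sequence k V E S}" for l
    using that assms(3) by auto
  show "r \<in> {length S | S. is_k_sequence k V E S}"
    using assms(1,2) by auto
qed

lemma mem_closed_nbhd_commute:
  assumes "symp E" "u \<in> V" "v \<in> V"
  shows "u \<in> closed_nbhd V E v \<longleftrightarrow> v \<in> closed_nbhd V E u"
  using assms by (auto simp: closed_nbhd_def dest: sympD)

lemma closed_nbhd_subset: "v \<in> V \<Longrightarrow> closed_nbhd V E v \<subseteq> V"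
  by (auto simp: closed_nbhd_def)

lemma k_sequence_length_less_card:
  assumes "finite V" "V \<noteq> {}" "symp E"
    and large_nbhds: "\<And>u. u \<in> V \<Longrightarrow> k < card (closed_nbhd V E u)"
    and S: "is_k_sequence k V E S"
  shows "length S < card V"
proof -
  have dist: "distinct S" and sub: "set S \<subseteq> V"
    using S by (auto simp: is_k_sequence_def)
  have "length S \<le> card V"
    using card_mono[OF \<open>finite V\<close> sub] distinct_card[OF dist] by simp
  moreover have "length S \<noteq> card V"
  proof
    assume "length S = card V"
    then have setS: "set S = V"
      using card_subset_eq[OF \<open>finite V\<close> sub] distinct_card[OF dist] by simp
    then have "S \<noteq> []" using assms(2) by auto
    define i where "i = length S - 1"
    define v where "v = S ! i"
    have i: "i < length S" using \<open>S \<noteq> []\<close> by (simp add: i_def)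
    have v: "v \<in> V" using i setS v_def by auto
    have earlier: "set (take i S) = V - {v}"
    proof -
      have "S = take i S @ [v]"
        using append_butlast_last_id[OF \<open>S \<noteq> []\<close>]
        by (simp only: i_def v_def butlast_conv_take last_conv_nth[OF \<open>S \<noteq> []\<close>])
      then have "distinct (take i S @ [v])" and "set (take i S @ [v]) = V"
        using dist setS by metis+
      then show ?thesis by auto
    qed
    obtain u where u: "u \<in> closed_nbhd V E v"
      and few: "card {x \<in> V - {v}. u \<in> closed_nbhd V E x} < k"
    proof -
      from S i obtain u where "u \<in> closed_nbhd V E (S ! i)"
        "card {x \<in> set (take i S). u \<in> closed_nbhd V E x} < k"
        unfolding is_k_sequence_iff_set_take by blast
      then show thesis using that by (simp add: earlier flip: v_def)
    qed
    have uV: "u \<in> V" using u closed_nbhd_subset[OF v] by auto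
    have "{x \<in> V - {v}. u \<in> closed_nbhd V E x} = closed_nbhd V E u - {v}"
      using closed_nbhd_subset[OF uV] mem_closed_nbhd_commute[OF \<open>symp E\<close> uV] by auto
    moreover have "v \<in> closed_nbhd V E u"
      using mem_closed_nbhd_commute[OF \<open>symp E\<close> uV v] u by simp
    moreover have "finite (closed_nbhd V E u)"
      using closed_nbhd_subset[OF uV] \<open>finite V\<close> finite_subset by blast
    ultimately show False
      using few large_nbhds[OF uV] by simp
  qed
  ultimately show ?thesis by simp
qed

abbreviation grid_V :: "nat \<Rightarrow> nat \<Rightarrow> (nat \<times> nat) set" where
  "grid_V m n \<equiv> cart_V (path_V m) (path_V n)"

abbreviation grid_E :: "nat \<times> nat \<Rightarrow> nat \<times> nat \<Rightarrow> bool" where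
  "grid_E \<equiv> cart_E path_E path_E"

lemma symp_cart_E: "symp E1 \<Longrightarrow> symp E2 \<Longrightarrow> symp (cart_E E1 E2)"
  by (auto simp: symp_def cart_E_def)

lemma symp_path_E: "symp path_E"
  by (auto simp: symp_def path_E_def)

lemma mem_grid_V [simp]: "(a, b) \<in> grid_V m n \<longleftrightarrow> a < m \<and> b < n"
  by (simp add: cart_V_def path_V_def)

lemma finite_grid_V: "finite (grid_V m n)"
  by (simp add: cart_V_def path_V_def)

lemma card_grid_V: "card (grid_V m n) = m * n"
  by (simp add: cart_V_def path_V_def card_cartesian_product)

lemma mem_closed_nbhd_grid:
  "(c, d) \<in> closed_nbhd (grid_V m n) grid_E (a, b) \<longleftrightarrow>
     (c, d) = (a, b) \<or>
     c < m \<and> d < n \<and> (c = a \<and> (d = Suc b \<or> b = Suc d) \<or> d = b \<and> (c = Suc a \<or> a = Suc c))"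
  by (auto simp: closed_nbhd_def cart_E_def path_E_def)

lemma card_closed_nbhd_grid_gt_2:
  assumes "2 \<le> m" "2 \<le> n" "v \<in> grid_V m n"
  shows "2 < card (closed_nbhd (grid_V m n) grid_E v)"
proof -
  obtain a b where v: "v = (a, b)" and "a < m" "b < n"
    using assms(3) by (cases v) auto
  define a' where "a' = (if a = 0 then 1 else a - 1)"
  define b' where "b' = (if b = 0 then 1 else b - 1)"
  have "a' \<noteq> a" "b' \<noteq> b"
    by (auto simp: a'_def b'_def)
  then have "card {(a, b), (a', b), (a, b')} = 3"
    by (simp add: card_insert_if)
  moreover have "{(a, b), (a', b), (a, b')} \<subseteq> closed_nbhd (grid_V m n) grid_E v"
    using assms \<open>a < m\<close> \<open>b < n\<close> by (auto simp: v mem_closed_nbhd_grid a'_def b'_def)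
  moreover have "finite (closed_nbhd (grid_V m n) grid_E v)"
    using closed_nbhd_subset[OF assms(3)] finite_grid_V finite_subset by blast
  ultimately have "3 \<le> card (closed_nbhd (grid_V m n) grid_E v)"
    by (metis card_mono)
  then show ?thesis by simp
qed

lemma mult_add_less_mult_add_iff:
  fixes a b c d n :: nat
  assumes "b < n" "d < n"
  shows "c * n + d < a * n + b \<longleftrightarrow> c < a \<or> c = a \<and> d < b"
proof
  assume lt: "c * n + d < a * n + b"
  then have "c \<le> a"
    using div_le_mono[OF less_imp_le[OF lt], of n] assms by simp
  then show "c < a \<or> c = a \<and> d < b"
    using lt by auto
next
  assume "c < a \<or> c = a \<and> d < b"
  then show "c * n + d < a * n + b"
  proof
    assume "c < a"
    then have "Suc c * n \<le> a * n"
      by (intro mult_le_mono1) simp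
    then show ?thesis
      using assms by simp
  qed simp
qed

lemma row_major_image_lessThan:
  fixes a b n :: nat
  assumes "b < n"
  shows "(\<lambda>i. (i div n, i mod n)) ` {..<a * n + b} = {(c, d). d < n \<and> (c < a \<or> c = a \<and> d < b)}"
proof -
  have image_iff: "(c, d) \<in> (\<lambda>i. (i div n, i mod n)) ` {..<a * n + b} \<longleftrightarrow>
      d < n \<and> c * n + d < a * n + b" for c d
  proof
    assume "(c, d) \<in> (\<lambda>i. (i div n, i mod n)) ` {..<a * n + b}"
    then obtain i where "i < a * n + b" "c = i div n" "d = i mod n"
      by auto
    then show "d < n \<and> c * n + d < a * n + b"
      using assms by auto
  next
    assume "d < n \<and> c * n + d < a * n + b"
    then show "(c, d) \<in> (\<lambda>i. (i div n, i mod n)) ` {..<a * n + b}"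
      by (intro image_eqI[of _ _ "c * n + d"]) auto
  qed
  then show ?thesis
    by (simp add: set_eq_iff split_paired_all image_iff mult_add_less_mult_add_iff[OF assms] cong: conj_cong)
qed

lemma grid_row_major_witness:
  assumes "b < n" and "a * n + b < m * n - 1"
  shows "\<exists>u \<in> closed_nbhd (grid_V m n) grid_E (a, b).
    card {x \<in> {(c, d). d < n \<and> (c < a \<or> c = a \<and> d < b)}. u \<in> closed_nbhd (grid_V m n) grid_E x} < 2"
    (is "\<exists>u \<in> _. card {x \<in> ?before. _} < 2")
proof -
  have "a * n < m * n"
    using assms(2) by linarith
  then have "a < m" by simp
  consider "Suc a < m" | "Suc a = m" "Suc b < n"
  proof (cases "Suc a < m")
    case False
    then have "Suc a = m" using \<open>a < m\<close> by simp
    moreover have "Suc b < n"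
    proof (rule ccontr)
      assume "\<not> Suc b < n"
      then have "n = Suc b" using \<open>b < n\<close> by simp
      then have "a * n + b = m * n - 1" using \<open>Suc a = m\<close>[symmetric] by simp
      with assms(2) show False by simp
    qed
    ultimately show thesis using that by blast
  qed
  then show ?thesis
  proof cases
    case 1
    have "{x \<in> ?before. (Suc a, b) \<in> closed_nbhd (grid_V m n) grid_E x} = {}"
      by (auto simp: mem_closed_nbhd_grid)
    then have "card {x \<in> ?before. (Suc a, b) \<in> closed_nbhd (grid_V m n) grid_E x} < 2"
      by (simp only: card.empty zero_less_numeral)
    moreover have "(Suc a, b) \<in> closed_nbhd (grid_V m n) grid_E (a, b)"
      using 1 \<open>b < n\<close> by (simp add: mem_closed_nbhd_grid)
    ultimately show ?thesis
      by blast
  next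
    case 2
    have "{x \<in> ?before. (a, Suc b) \<in> closed_nbhd (grid_V m n) grid_E x} \<subseteq> {(a - 1, Suc b)}"
      by (auto simp: mem_closed_nbhd_grid)
    then have "card {x \<in> ?before. (a, Suc b) \<in> closed_nbhd (grid_V m n) grid_E x} \<le> 1"
      using card_mono[of "{(a - 1, Suc b)}"] by simp
    then have "card {x \<in> ?before. (a, Suc b) \<in> closed_nbhd (grid_V m n) grid_E x} < 2"
      by simp
    moreover have "(a, Suc b) \<in> closed_nbhd (grid_V m n) grid_E (a, b)"
      using 2 \<open>a < m\<close> by (simp add: mem_closed_nbhd_grid)
    ultimately show ?thesis
      by blast
  qed
qed

lemma is_2_sequence_grid_row_major:
  "is_k_sequence 2 (grid_V m n) grid_E (map (\<lambda>i. (i div n, i mod n)) [0..<m * n - 1])"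
proof (cases "n = 0")
  case True
  then show ?thesis by (simp add: is_k_sequence_def)
next
  case False
  define S where "S = map (\<lambda>i. (i div n, i mod n)) [0..<m * n - 1]"
  have "distinct S"
    by (auto simp: S_def distinct_map inj_on_def) (metis div_mult_mod_eq)
  moreover have "set S \<subseteq> grid_V m n"
    using False by (auto simp: S_def less_mult_imp_div_less mult.commute)
  moreover have "\<exists>u \<in> closed_nbhd (grid_V m n) grid_E (S ! i).
      card {x \<in> set (take i S). u \<in> closed_nbhd (grid_V m n) grid_E x} < 2"
    if "i < length S" for i
  proof -
    define a where "a = i div n"
    define b where "b = i mod n"
    have i: "i = a * n + b" and "b < n"
      using False by (simp_all add: a_def b_def)
    have "S ! i = (a, b)"
      using that by (simp add: S_def a_def b_def)
    moreover have "set (take i S) = {(c, d). d < n \<and> (c < a \<or> c = a \<and> d < b)}"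
      using that \<open>b < n\<close> by (simp add: S_def take_map atLeast0LessThan i row_major_image_lessThan)
    moreover have "a * n + b < m * n - 1"
      using that by (simp add: S_def flip: i)
    ultimately show ?thesis
      using grid_row_major_witness[OF \<open>b < n\<close>] by simp
  qed
  ultimately have "is_k_sequence 2 (grid_V m n) grid_E S"
    by (simp add: is_k_sequence_iff_set_take)
  then show ?thesis
    by (simp only: S_def)
qed

theorem mainTheorem13:
  fixes m n :: nat
  assumes "m \<ge> 2" and "n \<ge> 2"
  shows "grundy_k 2 (cart_V (path_V m) (path_V n)) (cart_E path_E path_E) = m * n - 1"
proof (rule grundy_k_eqI[OF is_2_sequence_grid_row_major])
  show "length (map (\<lambda>i. (i div n, i mod n)) [0..<m * n - 1]) = m * n - 1"
    by simp
next
  fix S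
  assume "is_k_sequence 2 (grid_V m n) grid_E S"
  moreover have "grid_V m n \<noteq> {}"
    using assms by (simp add: cart_V_def path_V_def)
  ultimately have "length S < card (grid_V m n)"
    using assms card_closed_nbhd_grid_gt_2
    by (intro k_sequence_length_less_card) (auto simp: finite_grid_V symp_cart_E symp_path_E)
  then show "length S \<le> m * n - 1"
    by (simp add: card_grid_V)
qed

end
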